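(* Let $(A,\leq,\cdot,/)$ be a right-residuated magma satisfying condition (N). (1) If $(A,\leq)$ has a bottom element $0$, then $0/0$ is the top element of $(A,\leq)$. (2) If $(A,\leq)$ has a top element $\top$, then: (i) $A$ is unital, i.e. $x/x=y/y$ for all $x,y$ (in fact $x/x=\top$ and $\top x = x$ for all $x$); (ii) for all $x,y\in A$, $x\sqcap y\leq x$ and $x\sqcap y\leq y$; (iii) if moreover $A$ is finite, then $(A,\leq)$ has a bottom element.
   Context: Write $xy$ for $x\cdot y$; $\cdot$ binds more strongly than $/$, and $/$ binds more strongly than $\sqcap$, where $x\sqcap y := (x/y)y$. A right-residuated magma is a structure $(A,\leq,\cdot,/)$ where $(A,\leq)$ is a poset and $xy\leq z\iff x\leq z/y$ for all $x,y,z\in A$. Condition (N): for all $x,y\in A$, $x\leq y\iff x = y\sqcap x$. *)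

theory Defs
  imports Main
begin

definition right_residuated_magma ::
  "('a::order \<Rightarrow> 'a \<Rightarrow> 'a) \<Rightarrow> ('a \<Rightarrow> 'a \<Rightarrow> 'a) \<Rightarrow> bool" where
  "right_residuated_magma mult rdiv \<longleftrightarrow>
     (\<forall>x y z. mult x y \<le> z \<longleftrightarrow> x \<le> rdiv z y)"

definition rmeet :: "('a \<Rightarrow> 'a \<Rightarrow> 'a) \<Rightarrow> ('a \<Rightarrow> 'a \<Rightarrow> 'a) \<Rightarrow> 'a \<Rightarrow> 'a \<Rightarrow> 'a" where
  "rmeet mult rdiv x y = mult (rdiv x y) y"

definition condN :: "('a::order \<Rightarrow> 'a \<Rightarrow> 'a) \<Rightarrow> ('a \<Rightarrow> 'a \<Rightarrow> 'a) \<Rightarrow> bool" where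
  "condN mult rdiv \<longleftrightarrow> (\<forall>x y. x \<le> y \<longleftrightarrow> x = rmeet mult rdiv y x)"

end

theory Submission
  imports Defs
begin

text \<open>Residuation gives \<open>(z/y)y \<le> z\<close> and monotonicity of \<open>x \<mapsto> xy\<close>, while (N) recovers
  any \<open>x \<le> y\<close> as \<open>x = (y/x)x\<close>. For a bottom \<open>0\<close>, (N) applied to \<open>0 \<le> x0\<close> gives
  \<open>x0 \<le> (x0/0)0 = 0\<close>, i.e. \<open>x \<le> 0/0\<close>. For a top \<open>\<top>\<close> one has \<open>\<top>/x = \<top>\<close>, so (N) applied to
  \<open>x \<le> \<top>\<close> gives \<open>\<top>x = x\<close>, and then \<open>(x/y)y \<le> \<top>y = y\<close>: any two elements have the common
  lower bound \<open>x \<sqinter> y\<close>, so a finite algebra has a least element.\<close>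

lemma finite_set_has_lower_bound:
  fixes S :: "'a::preorder set"
  assumes "finite S" and common_lower: "\<And>x y::'a. \<exists>z. z \<le> x \<and> z \<le> y"
  shows "\<exists>b. \<forall>x\<in>S. b \<le> x"
  using assms(1)
proof (induction S rule: finite_induct)
  case empty
  then show ?case by simp
next
  case (insert a S)
  then obtain b where b: "\<forall>x\<in>S. b \<le> x" by blast
  obtain z where "z \<le> a" "z \<le> b" using common_lower[of a b] by blast
  with b show ?case by (blast intro: order_trans)
qed

lemma finite_type_has_least:
  assumes "finite (UNIV :: 'a::preorder set)" and "\<And>x y::'a. \<exists>z. z \<le> x \<and> z \<le> y"
  shows "\<exists>b::'a. \<forall>x. b \<le> x"
  using finite_set_has_lower_bound[OF assms] by blast

locale right_residuated =
  fixes mult :: "'a::order \<Rightarrow> 'a \<Rightarrow> 'a" and rdiv :: "'a \<Rightarrow> 'a \<Rightarrow> 'a"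
  assumes residuated: "right_residuated_magma mult rdiv"
begin

lemma residual_iff: "mult x y \<le> z \<longleftrightarrow> x \<le> rdiv z y"
  using residuated unfolding right_residuated_magma_def by blast

lemma le_rdiv_mult: "x \<le> rdiv (mult x y) y"
  using residual_iff by blast

lemma mult_rdiv_le: "mult (rdiv z y) y \<le> z"
  using residual_iff by blast

lemma mult_left_mono: "x \<le> x' \<Longrightarrow> mult x y \<le> mult x' y"
  using residual_iff order_trans by blast

lemma rmeet_le_left: "rmeet mult rdiv x y \<le> x"
  unfolding rmeet_def by (rule mult_rdiv_le)

lemma top_rdiv_eq:
  assumes "\<forall>x. x \<le> t"
  shows "rdiv t x = t"
  using assms residual_iff by (meson order.antisym)

end

locale right_residuated_N = right_residuated +
  assumes N: "condN mult rdiv"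
begin

lemma le_iff_eq_rmeet: "x \<le> y \<longleftrightarrow> x = mult (rdiv y x) x"
  using N unfolding condN_def rmeet_def by blast

lemma bot_rdiv_self_greatest:
  assumes bot: "\<forall>x. b \<le> x"
  shows "x \<le> rdiv b b"
proof -
  have "mult x b \<le> mult (rdiv (mult x b) b) b"
    using le_rdiv_mult by (rule mult_left_mono)
  also have "\<dots> = b"
    using bot le_iff_eq_rmeet by metis
  finally show ?thesis
    using residual_iff by blast
qed

lemma top_mult_left:
  assumes top: "\<forall>x. x \<le> t"
  shows "mult t x = x"
  using le_iff_eq_rmeet top top_rdiv_eq by metis

lemma rdiv_self_eq_top:
  assumes top: "\<forall>x. x \<le> t"
  shows "rdiv x x = t"
proof (rule order.antisym)
  show "rdiv x x \<le> t" using top by blast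
  show "t \<le> rdiv x x"
    using residual_iff top_mult_left[OF top] by (metis order_refl)
qed

lemma rmeet_le_right:
  fixes t :: 'a
  assumes top: "\<forall>x. x \<le> t"
  shows "rmeet mult rdiv x y \<le> y"
proof -
  have "rmeet mult rdiv x y \<le> mult t y"
    unfolding rmeet_def using top by (blast intro: mult_left_mono)
  then show ?thesis
    using top_mult_left[OF top] by simp
qed

end

theorem mainTheorem11:
  fixes mult :: "'a::order \<Rightarrow> 'a \<Rightarrow> 'a" and rdiv :: "'a \<Rightarrow> 'a \<Rightarrow> 'a"
  assumes "right_residuated_magma mult rdiv"
    and "condN mult rdiv"
  shows "(\<forall>b. (\<forall>x. b \<le> x) \<longrightarrow> (\<forall>x. x \<le> rdiv b b))
    \<and> (\<forall>t. (\<forall>x. x \<le> t) \<longrightarrow>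
          (\<forall>x y. rdiv x x = rdiv y y)
        \<and> (\<forall>x. rdiv x x = t \<and> mult t x = x)
        \<and> (\<forall>x y. rmeet mult rdiv x y \<le> x \<and> rmeet mult rdiv x y \<le> y)
        \<and> (finite (UNIV :: 'a set) \<longrightarrow> (\<exists>b::'a. \<forall>x. b \<le> x)))"
proof -
  interpret right_residuated_N mult rdiv
    using assms by (simp add: right_residuated_N_def right_residuated_N_axioms_def right_residuated_def)
  have common_lower_bound: "\<forall>x. x \<le> t \<Longrightarrow> \<exists>z. z \<le> x \<and> z \<le> y" for t x y :: 'a
    using rmeet_le_left rmeet_le_right by blast
  show ?thesis
    using bot_rdiv_self_greatest rdiv_self_eq_top top_mult_left rmeet_le_left rmeet_le_right
      finite_type_has_least[OF _ common_lower_bound]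
    by (auto simp del: all_simps)
qed

end
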